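(* Let $m=m_n\ge 1$ and $d=d_n$ be integers with $2\le d\le n$, and let $H^*_{nmd}$ be the random hypergraph on node set $\{1,\dots,n\}$ whose hyperedge set is $\{V_1,\dots,V_m\}$, where $V_1,\dots,V_m$ are mutually independent uniformly random $d$-element subsets of $\{1,\dots,n\}$. Then, as $n\to\infty$, \[ \mathbb{P}(H^*_{nmd} \text{ is connected}) \to \begin{cases} 0 & \text{if } \log n + m\log(1-d/n) \to +\infty,\\ 1 & \text{if } \log n + m\log(1-d/n) \to -\infty.\end{cases} \]
   Context: A hypergraph on node set $V$ is connected if for every partition of $V$ into nonempty sets $V_1',V_2'$ some hyperedge meets both. Convention $\log 0=-\infty$. *)

theory Defs
  imports "HOL-Probability.Probability"
begin

definition hyp_connected :: "'a set \<Rightarrow> 'a set set \<Rightarrow> bool" where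
  "hyp_connected V E \<longleftrightarrow>
     (\<forall>A. A \<subseteq> V \<and> A \<noteq> {} \<and> V - A \<noteq> {} \<longrightarrow>
        (\<exists>e\<in>E. e \<inter> A \<noteq> {} \<and> e \<inter> (V - A) \<noteq> {}))"

definition unif_dsubset :: "nat \<Rightarrow> nat \<Rightarrow> nat set pmf" where
  "unif_dsubset n d = pmf_of_set {S. S \<subseteq> {1..n} \<and> card S = d}"

definition hyp_model :: "nat \<Rightarrow> nat \<Rightarrow> nat \<Rightarrow> (nat \<Rightarrow> nat set) pmf" where
  "hyp_model n m d = Pi_pmf {..<m} {} (\<lambda>_. unif_dsubset n d)"

definition prob_connected :: "nat \<Rightarrow> nat \<Rightarrow> nat \<Rightarrow> real" where
  "prob_connected n m d =
     measure_pmf.prob (hyp_model n m d)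
       {V. hyp_connected {1..n} (V ` {..<m})}"

text \<open>The quantity log n + m log(1 - d/n) as an extended real, with log 0 = -infinity.\<close>
definition threshold_quantity :: "nat \<Rightarrow> nat \<Rightarrow> nat \<Rightarrow> ereal" where
  "threshold_quantity n m d =
     ereal (ln (real n)) +
     (if d = n then - \<infinity> else ereal (real m * ln (1 - real d / real n)))"

end

theory Submission
  imports Defs
begin

text \<open>Let \<open>\<epsilon> = n (1 - d/n)^m\<close>. A fixed node misses a random \<open>d\<close>-set with probability
  \<open>1 - d/n\<close>, so \<open>\<epsilon>\<close> is the expected number of isolated nodes, and the threshold quantity is
  \<open>ln \<epsilon>\<close>. If \<open>\<epsilon> \<rightarrow> \<infinity>\<close>, two distinct nodes are both missed with probability at most
  \<open>(1 - d/n)^(2m)\<close>, so the second moment method shows that with probability at least \<open>1 - 1/\<epsilon>\<close>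
  some node is isolated, and then the hypergraph is disconnected. If \<open>\<epsilon> \<rightarrow> 0\<close>, a disconnected
  hypergraph has a side \<open>A\<close> with \<open>1 \<le> |A| = k \<le> n/2\<close> that no hyperedge crosses. A random
  \<open>d\<close>-set fails to cross a fixed such cut with probability at most \<open>(1 - d/n)^(k(n - k)/(n - 1))\<close>,
  and with \<open>binomial n k \<le> (2e)^k n^(k(n - k)/n)\<close> the union bound over all cuts is at most
  \<open>\<Sum>\<^sub>k (2e\<surd>\<epsilon>)^k\<close>, which tends to 0.\<close>

lemma one_minus_mult_le_powr:
  fixes x c :: real
  assumes "0 \<le> x" "x \<le> 1" "1 \<le> c"
  shows "1 - c * x \<le> (1 - x) powr c"
proof (cases "x = 1")
  case True
  then show ?thesis using assms by simp
next
  case False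
  define y where "y = (1 - x) powr c"
  have "y > 0" using assms False by (simp add: y_def)
  then have "y powr (1/c) * 1 powr (1 - 1/c) \<le> (1/c) * y + (1 - 1/c) * 1"
    using Youngs_inequality_0[of "1/c" "1 - 1/c" y 1] assms by simp
  moreover have "y powr (1/c) = 1 - x"
    using assms False by (simp add: y_def powr_powr)
  ultimately have "c * (1 - x) \<le> c * (y/c + (1 - 1/c))"
    using assms by (intro mult_left_mono) auto
  then show ?thesis using assms by (simp add: y_def algebra_simps)
qed

lemma power_le_exp_mult_fact: "x ^ k \<le> exp x * fact k" if "0 \<le> x" for x :: real
proof -
  have "(\<Sum>i\<in>{k}. x ^ i /\<^sub>R fact i) \<le> (\<Sum>i. x ^ i /\<^sub>R fact i)"
    using that by (intro sum_le_suminf summable_exp_generic) auto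
  then have "x ^ k / fact k \<le> exp x" by (simp add: exp_def divide_inverse_commute)
  then show ?thesis by (simp add: field_simps)
qed

lemma powr_square_div_le_double_power:
  assumes "1 \<le> k" "2 * k \<le> n"
  shows "real n powr (real k * real k / real n) \<le> (2 * real k) ^ k"
proof -
  have k: "real k \<ge> 1" and n: "real n \<ge> 2 * real k" using assms by simp_all
  have "ln 2 \<le> ln (2 * real k)" using k by simp
  then have "1/2 \<le> ln (2 * real k)" using ln2_ge_two_thirds by linarith
  then have half: "(real n - real k) / 2 \<le> (real n - real k) * ln (2 * real k)"
    using n k by (simp add: mult_left_mono)
  have "ln (real n) = ln (2 * real k) + ln (real n / (2 * real k))"
    using k n by (simp add: ln_div)
  also have "\<dots> \<le> ln (2 * real k) + (real n / (2 * real k) - 1)"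
    using k n by (intro add_left_mono ln_le_minus_one) auto
  finally have "real k * ln (real n) \<le> real k * ln (2 * real k) + (real n - real k) / 2"
    using k by (auto simp: field_simps dest: mult_left_mono[of _ _ "real k"])
  also have "\<dots> \<le> real n * ln (2 * real k)"
    using half by (simp add: algebra_simps)
  finally have "real k * real k / real n * ln (real n) \<le> real k * ln (2 * real k)"
    using k n by (simp add: field_simps)
  then have "exp (real k * real k / real n * ln (real n)) \<le> exp (real k * ln (2 * real k))"
    by simp
  then show ?thesis using k n by (simp add: powr_def exp_of_nat_mult)
qed

lemma binomial_le_powr:
  assumes "1 \<le> k" "2 * k \<le> n"
  shows "real (n choose k) \<le> (2 * exp 1) ^ k * real n powr (real k * (real n - real k) / real n)"
proof -
  have k: "real k \<ge> 1" and n: "real n \<ge> 2 * real k" using assms by simp_all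
  have "real n ^ k = real n powr (real k * (real n - real k) / real n) * real n powr (real k * real k / real n)"
  proof -
    have "real k * (real n - real k) / real n + real k * real k / real n = real k"
      using k n by (simp add: field_simps)
    then show ?thesis using k n by (simp add: powr_add[symmetric] powr_realpow)
  qed
  also have "\<dots> \<le> real n powr (real k * (real n - real k) / real n) * (2 * real k) ^ k"
    using powr_square_div_le_double_power[OF assms] by (simp add: mult_left_mono)
  finally have nk: "real n ^ k \<le> real n powr (real k * (real n - real k) / real n) * (2 * real k) ^ k" .
  have "real (n choose k) * fact k \<le> real n ^ k"
    using binomial_fact_pow[of n k] by (metis of_nat_fact of_nat_le_iff of_nat_mult of_nat_power)
  also note nk
  also have "real n powr (real k * (real n - real k) / real n) * (2 * real k) ^ k
      = real n powr (real k * (real n - real k) / real n) * 2 ^ k * real k ^ k"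
    by (simp add: power_mult_distrib)
  also have "\<dots> \<le> real n powr (real k * (real n - real k) / real n) * 2 ^ k * (exp (real k) * fact k)"
    using power_le_exp_mult_fact[of "real k" k] by (intro mult_left_mono) auto
  also have "\<dots> = (2 * exp 1) ^ k * real n powr (real k * (real n - real k) / real n) * fact k"
    by (simp add: power_mult_distrib exp_of_nat_mult[symmetric] mult_ac)
  finally show ?thesis by simp
qed

lemma binomial_pred_ratio:
  assumes "d \<le> n" "1 \<le> n"
  shows "real ((n - 1) choose d) / real (n choose d) = 1 - real d / real n"
proof -
  have "real (n - d) * real (n choose d) = real n * real ((n - 1) choose d)"
    by (metis binomial_absorb_comp of_nat_mult)
  moreover have "real (n choose d) > 0" using assms by simp
  ultimately show ?thesis using assms by (simp add: field_simps of_nat_diff)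
qed

lemma binomial_pred2_ratio_le:
  assumes "d \<le> n" "2 \<le> n"
  shows "real ((n - 2) choose d) / real (n choose d) \<le> (1 - real d / real n)\<^sup>2"
proof (cases "d = n")
  case False
  have "real ((n - 2) choose d) / real ((n - 1) choose d) = 1 - real d / real (n - 1)"
    using binomial_pred_ratio[of d "n - 1"] assms False by (simp add: numeral_2_eq_2)
  also have "\<dots> \<le> 1 - real d / real n"
    using assms by (intro diff_left_mono divide_left_mono) auto
  finally have "real ((n - 2) choose d) / real (n choose d)
      \<le> (1 - real d / real n) * (real ((n - 1) choose d) / real (n choose d))"
    using assms False by (simp add: divide_simps split: if_splits)
  then show ?thesis
    using binomial_pred_ratio[of d n] assms by (simp only: power2_eq_square)
qed (use assms in simp)

lemma real_binomial_Suc: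
  "real (M choose Suc d) = real (M choose d) * real (M - d) / real (Suc d)"
proof -
  have "(M choose Suc d) * Suc d = (M choose d) * (M - d)"
  proof (cases M)
    case (Suc M')
    then show ?thesis
      using Suc_times_binomial_eq[of M' d] binomial_absorb_comp[of "Suc M'" d] by (simp add: mult.commute)
  qed simp
  then have "real (M choose Suc d) * real (Suc d) = real (M choose d) * real (M - d)"
    by (metis of_nat_mult)
  then show ?thesis by (simp add: field_simps del: of_nat_Suc)
qed

definition one_sided_fraction :: "nat \<Rightarrow> nat \<Rightarrow> nat \<Rightarrow> real" where
  "one_sided_fraction n k d = (real ((n - k) choose d) + real (k choose d)) / real (n choose d)"

lemma one_sided_fraction_nonneg: "one_sided_fraction n k d \<ge> 0"
  by (simp add: one_sided_fraction_def)

lemma one_sided_fraction_two: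
  assumes "2 * k \<le> n" "2 \<le> n"
  shows "one_sided_fraction n k 2 = 1 - real k * (real n - real k) / (real n - 1) * (2 / real n)"
proof -
  have choose2: "real (M choose 2) = real M * (real M - 1) / 2" for M
    using real_binomial_Suc[of M 1] by (cases M) (simp_all add: numeral_2_eq_2)
  have nk: "real (n - k) = real n - real k" using assms by (simp add: of_nat_diff)
  have "real n \<noteq> 0" "real n - 1 \<noteq> 0" using assms by auto
  then show ?thesis
    unfolding one_sided_fraction_def choose2 nk by (simp add: divide_simps) (simp add: algebra_simps)
qed

lemma one_sided_fraction_Suc_le:
  assumes "d < n" "2 * k \<le> n"
  shows "one_sided_fraction n k (Suc d) \<le> one_sided_fraction n k d * (real (n - k - d) / real (n - d))"
proof -
  have pos: "real (n choose d) * real (n - d) > 0" using assms by simp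
  have "one_sided_fraction n k (Suc d)
      = (real ((n - k) choose d) * real (n - k - d) + real (k choose d) * real (k - d))
        / (real (n choose d) * real (n - d))"
    unfolding one_sided_fraction_def real_binomial_Suc
    by (simp add: add_divide_distrib[symmetric] del: of_nat_Suc)
  also have "\<dots> \<le> (real ((n - k) choose d) * real (n - k - d) + real (k choose d) * real (n - k - d))
        / (real (n choose d) * real (n - d))"
    using assms pos by (intro divide_right_mono add_left_mono mult_left_mono) auto
  also have "\<dots> = one_sided_fraction n k d * (real (n - k - d) / real (n - d))"
    unfolding one_sided_fraction_def by (simp add: field_simps)
  finally show ?thesis .
qed

lemma diff_ratio_le_powr:
  assumes "1 \<le> c" "c \<le> real k" "d < n"
  shows "real (n - k - d) / real (n - d) \<le> (1 - 1 / (real n - real d)) powr c"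
proof (cases "k + d \<le> n")
  case True
  have nd: "real n - real d \<ge> 1" using assms by simp
  then have "real (n - k - d) / real (n - d) = 1 - real k * (1 / (real n - real d))"
    using True by (simp add: of_nat_diff field_simps)
  also have "\<dots> \<le> 1 - c * (1 / (real n - real d))"
    using assms nd by (intro diff_left_mono mult_right_mono) auto
  also have "\<dots> \<le> (1 - 1 / (real n - real d)) powr c"
    using assms nd by (intro one_minus_mult_le_powr) auto
  finally show ?thesis .
qed simp

text \<open>The exponent \<open>c = k(n - k)/(n - 1)\<close> makes the case \<open>d = 2\<close> read \<open>1 - c\<cdot>(2/n)\<close>, which
  Bernoulli's inequality turns into \<open>(1 - 2/n) powr c\<close>; each further step multiplies by at most
  \<open>(1 - 1/(n - d)) powr c\<close>, and these factors telescope to \<open>(1 - d/n) powr c\<close>.\<close>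
lemma one_sided_fraction_le_powr:
  assumes k: "1 \<le> k" "2 * k \<le> n" and d: "2 \<le> d" "d \<le> n"
  shows "one_sided_fraction n k d \<le> (1 - real d / real n) powr (real k * (real n - real k) / (real n - 1))"
proof -
  define c where "c = real k * (real n - real k) / (real n - 1)"
  have n2: "real n \<ge> 2" using k by simp
  have "real n - 1 \<le> real k * (real n - real k)"
    using mult_nonneg_nonneg[of "real k - 1" "real n - real k - 1"] k by (simp add: algebra_simps)
  then have c1: "1 \<le> c" using n2 by (simp add: c_def field_simps)
  have ck: "c \<le> real k"
    using k n2 mult_left_mono[of "real n - real k" "real n - 1" "real k"] by (simp add: c_def field_simps)
  from d have "d \<le> n \<longrightarrow> one_sided_fraction n k d \<le> (1 - real d / real n) powr c"
  proof (induction d rule: nat_induct_at_least)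
    case base
    show ?case
      using one_sided_fraction_two[OF k(2)] one_minus_mult_le_powr[of "2 / real n" c] n2 c1
      by (simp add: c_def)
  next
    case (Suc d)
    show ?case
    proof
      assume "Suc d \<le> n"
      then have nd: "real n - real d \<ge> 1" "d < n" by auto
      have "one_sided_fraction n k (Suc d) \<le> one_sided_fraction n k d * (real (n - k - d) / real (n - d))"
        using one_sided_fraction_Suc_le nd k by simp
      also have "\<dots> \<le> (1 - real d / real n) powr c * (1 - 1 / (real n - real d)) powr c"
        using Suc.IH nd diff_ratio_le_powr[OF c1 ck nd(2)] one_sided_fraction_nonneg by (intro mult_mono) auto
      also have "\<dots> = ((1 - real d / real n) * (1 - 1 / (real n - real d))) powr c"
        using nd n2 by (subst powr_mult) (auto simp: field_simps)
      also have "(1 - real d / real n) * (1 - 1 / (real n - real d)) = 1 - real (Suc d) / real n"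
        using nd n2 by (simp add: field_simps)
      finally show "one_sided_fraction n k (Suc d) \<le> (1 - real (Suc d) / real n) powr c" .
    qed
  qed
  then show ?thesis using d by (simp add: c_def)
qed

definition expected_isolated :: "nat \<Rightarrow> nat \<Rightarrow> nat \<Rightarrow> real" where
  "expected_isolated n m d = real n * (1 - real d / real n) ^ m"

lemma expected_isolated_nonneg: "d \<le> n \<Longrightarrow> 0 \<le> expected_isolated n m d"
  by (cases "n = 0") (simp_all add: expected_isolated_def)

lemma binomial_mult_one_sided_power_le:
  assumes k: "1 \<le> k" "2 * k \<le> n" and d: "2 \<le> d" "d \<le> n"
    and small: "expected_isolated n m d \<le> 1"
  shows "real (n choose k) * one_sided_fraction n k d ^ m
           \<le> (2 * exp 1 * sqrt (expected_isolated n m d)) ^ k"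
proof -
  define p where "p = 1 - real d / real n"
  define \<epsilon> where "\<epsilon> = expected_isolated n m d"
  define c where "c = real k * (real n - real k) / (real n - 1)"
  define g where "g = real k * (real n - real k) / real n"
  have kn: "real k \<ge> 1" "real n \<ge> 2 * real k" using k by simp_all
  have p: "0 \<le> p" using d by (simp add: p_def)
  have \<epsilon>: "0 \<le> \<epsilon>" "\<epsilon> \<le> 1" using small d by (simp_all add: \<epsilon>_def expected_isolated_nonneg)
  have g: "real k / 2 \<le> g" "g \<le> c"
    using kn by (simp_all add: g_def c_def field_simps mult_left_mono)
  have "one_sided_fraction n k d ^ m \<le> (p powr c) ^ m"
    using one_sided_fraction_le_powr[OF k d] one_sided_fraction_nonneg
    by (intro power_mono) (simp_all add: p_def c_def)
  also have "(p powr c) ^ m = (p ^ m) powr c"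
    using p by (induction m) (simp_all add: powr_mult)
  also have "p ^ m = \<epsilon> / real n"
    using kn by (simp add: \<epsilon>_def expected_isolated_def p_def)
  also have "(\<epsilon> / real n) powr c = \<epsilon> powr c / real n powr c"
    using \<epsilon> by (simp add: powr_divide)
  also have "\<epsilon> powr c \<le> sqrt \<epsilon> ^ k"
  proof -
    have "\<epsilon> powr c \<le> \<epsilon> powr (real k / 2)" using g \<epsilon> by (intro powr_mono') auto
    also have "\<dots> = sqrt \<epsilon> ^ k"
      using \<epsilon> k by (simp add: powr_half_sqrt_powr powr_realpow' real_sqrt_power)
    finally show ?thesis .
  qed
  also have "real n powr c \<ge> real n powr g" using g kn by (intro powr_mono) auto
  hence "sqrt \<epsilon> ^ k / real n powr c \<le> sqrt \<epsilon> ^ k / real n powr g"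
    using kn \<epsilon> by (intro divide_left_mono) auto
  finally have "one_sided_fraction n k d ^ m \<le> sqrt \<epsilon> ^ k / real n powr g"
    using kn by (simp add: divide_right_mono)
  then have "real (n choose k) * one_sided_fraction n k d ^ m
      \<le> (2 * exp 1) ^ k * real n powr g * (sqrt \<epsilon> ^ k / real n powr g)"
    using binomial_le_powr[OF k] one_sided_fraction_nonneg
    by (intro mult_mono) (simp_all add: g_def)
  also have "\<dots> = (2 * exp 1 * sqrt \<epsilon>) ^ k"
    using kn by (simp add: power_mult_distrib)
  finally show ?thesis by (simp add: \<epsilon>_def)
qed

definition dsubsets :: "nat \<Rightarrow> nat \<Rightarrow> nat set set" where
  "dsubsets n d = {S. S \<subseteq> {1..n} \<and> card S = d}"

lemma finite_dsubsets: "finite (dsubsets n d)"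
  unfolding dsubsets_def by (rule finite_subset[of _ "Pow {1..n}"]) auto

lemma card_dsubsets: "card (dsubsets n d) = n choose d"
  unfolding dsubsets_def using n_subsets[of "{1..n}" d] by simp

lemma dsubsets_nonempty: "d \<le> n \<Longrightarrow> dsubsets n d \<noteq> {}"
  using card_dsubsets[of n d] by fastforce

lemma measure_unif_dsubset:
  "d \<le> n \<Longrightarrow> measure_pmf.prob (unif_dsubset n d) E = real (card (dsubsets n d \<inter> E)) / real (n choose d)"
  unfolding unif_dsubset_def dsubsets_def[symmetric]
  by (simp add: measure_pmf_of_set finite_dsubsets dsubsets_nonempty card_dsubsets)

lemma finite_set_pmf_hyp_model: "d \<le> n \<Longrightarrow> finite (set_pmf (hyp_model n m d))"
  unfolding hyp_model_def unif_dsubset_def dsubsets_def[symmetric]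
  by (simp add: set_Pi_pmf finite_PiE_dflt finite_dsubsets dsubsets_nonempty)

lemma measure_hyp_model_all:
  "measure_pmf.prob (hyp_model n m d) {V. \<forall>j<m. V j \<in> E} = measure_pmf.prob (unif_dsubset n d) E ^ m"
proof -
  have "{V. \<forall>j<m. V j \<in> E} = Pi {..<m} (\<lambda>_. E)" by (auto simp: Pi_def)
  then show ?thesis unfolding hyp_model_def by (simp add: measure_Pi_pmf_Pi)
qed

lemma measure_unif_dsubset_disjoint:
  assumes "B \<subseteq> {1..n}" "d \<le> n"
  shows "measure_pmf.prob (unif_dsubset n d) {S. S \<inter> B = {}}
           = real ((n - card B) choose d) / real (n choose d)"
proof -
  have "finite B" using assms finite_subset by blast
  moreover have "dsubsets n d \<inter> {S. S \<inter> B = {}} = {S. S \<subseteq> {1..n} - B \<and> card S = d}"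
    unfolding dsubsets_def by blast
  ultimately show ?thesis
    using assms n_subsets[of "{1..n} - B" d] by (simp add: measure_unif_dsubset card_Diff_subset)
qed

lemma measure_hyp_model_avoid:
  assumes "B \<subseteq> {1..n}" "d \<le> n"
  shows "measure_pmf.prob (hyp_model n m d) {V. \<forall>j<m. V j \<inter> B = {}}
           = (real ((n - card B) choose d) / real (n choose d)) ^ m"
  using measure_hyp_model_all[of n m d "{S. S \<inter> B = {}}"] measure_unif_dsubset_disjoint[OF assms]
  by simp

lemma measure_unif_dsubset_one_sided:
  assumes A: "A \<subseteq> {1..n}" and d: "1 \<le> d" "d \<le> n"
  shows "measure_pmf.prob (unif_dsubset n d) {S. S \<inter> A = {} \<or> S \<inter> ({1..n} - A) = {}}
           = one_sided_fraction n (card A) d"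
proof -
  let ?P = "measure_pmf.prob (unif_dsubset n d)"
  have cA: "card A \<le> n" "card ({1..n} - A) = n - card A"
    using A card_mono[OF _ A] by (auto simp: card_Diff_subset finite_subset)
  have "{S. S \<inter> A = {} \<or> S \<inter> ({1..n} - A) = {}} = {S. S \<inter> A = {}} \<union> {S. S \<inter> ({1..n} - A) = {}}"
    by blast
  moreover have "{S. S \<inter> A = {}} \<inter> {S. S \<inter> ({1..n} - A) = {}} = {S. S \<inter> {1..n} = {}}"
    using A by blast
  moreover have "?P {S. S \<inter> {1..n} = {}} = 0"
    using measure_unif_dsubset_disjoint[of "{1..n}" n d] d by simp
  ultimately have "?P {S. S \<inter> A = {} \<or> S \<inter> ({1..n} - A) = {}}
      = ?P {S. S \<inter> A = {}} + ?P {S. S \<inter> ({1..n} - A) = {}}"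
    by (simp add: measure_Un3 measure_pmf.fmeasurable_eq_sets)
  then show ?thesis
    using A d cA measure_unif_dsubset_disjoint[of A n d] measure_unif_dsubset_disjoint[of "{1..n} - A" n d]
    by (simp add: one_sided_fraction_def add_divide_distrib add.commute)
qed

lemma prob_no_event_le_second_moment:
  fixes M :: "'a pmf" and B :: "'b \<Rightarrow> 'a set"
  assumes fin: "finite (set_pmf M)" "finite I"
    and \<mu>: "\<mu> = (\<Sum>i\<in>I. measure_pmf.prob M (B i))" "\<mu> > 0"
  shows "measure_pmf.prob M {x. \<forall>i\<in>I. x \<notin> B i}
           \<le> ((\<Sum>i\<in>I. \<Sum>j\<in>I. measure_pmf.prob M (B i \<inter> B j)) - \<mu>\<^sup>2) / \<mu>\<^sup>2"
proof -
  define X where "X x = (\<Sum>i\<in>I. indicator (B i) x :: real)" for x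
  define Z where "Z = {x. \<forall>i\<in>I. x \<notin> B i}"
  have int: "integrable (measure_pmf M) f" for f :: "'a \<Rightarrow> real"
    using fin(1) by (rule integrable_measure_pmf_finite)
  have EX: "measure_pmf.expectation M X = \<mu>"
    unfolding X_def \<mu> by (simp add: integral_sum int)
  have "(\<lambda>x. (X x)\<^sup>2) = (\<lambda>x. \<Sum>i\<in>I. \<Sum>j\<in>I. indicator (B i \<inter> B j) x)"
    by (simp add: X_def power2_eq_square sum_product indicator_inter_arith)
  then have EX2: "measure_pmf.expectation M (\<lambda>x. (X x)\<^sup>2)
      = (\<Sum>i\<in>I. \<Sum>j\<in>I. measure_pmf.prob M (B i \<inter> B j))"
    by (simp add: integral_sum int)
  have "indicator Z x * \<mu>\<^sup>2 \<le> (X x - \<mu>)\<^sup>2" for x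
    by (cases "x \<in> Z") (simp_all add: X_def Z_def)
  then have "measure_pmf.expectation M (\<lambda>x. indicator Z x * \<mu>\<^sup>2)
      \<le> measure_pmf.expectation M (\<lambda>x. (X x - \<mu>)\<^sup>2)"
    by (intro integral_mono int)
  then have "measure_pmf.prob M Z * \<mu>\<^sup>2 \<le> measure_pmf.expectation M (\<lambda>x. (X x - \<mu>)\<^sup>2)"
    by simp
  also have "\<dots> = measure_pmf.expectation M (\<lambda>x. (X x)\<^sup>2) - 2 * \<mu> * measure_pmf.expectation M X + \<mu>\<^sup>2"
    by (simp add: power2_diff int)
  finally show ?thesis
    using EX EX2 \<mu>(2) by (simp add: Z_def field_simps power2_eq_square)
qed

lemma hyp_connected_imp_covered:
  assumes "hyp_connected V E" "i \<in> V" "j \<in> V" "i \<noteq> j"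
  shows "\<exists>e\<in>E. i \<in> e"
proof -
  have "{i} \<subseteq> V" "V - {i} \<noteq> {}" using assms by auto
  then obtain e where "e \<in> E" "e \<inter> {i} \<noteq> {}"
    using assms(1) unfolding hyp_connected_def by blast
  then show ?thesis by blast
qed

lemma prob_connected_le_inverse_expected_isolated:
  assumes n: "2 \<le> n" "d \<le> n" and pos: "expected_isolated n m d > 0"
  shows "prob_connected n m d \<le> 1 / expected_isolated n m d"
proof -
  define M where "M = hyp_model n m d"
  define p where "p = 1 - real d / real n"
  define B where "B i = {V. \<forall>l<m. V l \<inter> {i} = {}}" for i :: nat
  define \<mu> where "\<mu> = expected_isolated n m d"
  have pB: "measure_pmf.prob M (B i) = p ^ m" if "i \<in> {1..n}" for i
    using measure_hyp_model_avoid[of "{i}" n d m] binomial_pred_ratio[of d n] that n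
    by (simp add: M_def B_def p_def)
  have pBB: "measure_pmf.prob M (B i \<inter> B j) \<le> (if i = j then p ^ m else 0) + p ^ m * p ^ m"
    if "i \<in> {1..n}" "j \<in> {1..n}" for i j
  proof (cases "i = j")
    case False
    have "B i \<inter> B j = {V. \<forall>l<m. V l \<inter> {i, j} = {}}" unfolding B_def by auto
    then have "measure_pmf.prob M (B i \<inter> B j) = (real ((n - 2) choose d) / real (n choose d)) ^ m"
      using measure_hyp_model_avoid[of "{i, j}" n d m] that n False by (simp add: M_def numeral_2_eq_2)
    also have "\<dots> \<le> (p\<^sup>2) ^ m"
      using binomial_pred2_ratio_le[OF n(2,1)] by (intro power_mono) (auto simp: p_def)
    finally show ?thesis using False by (simp add: power_mult_distrib power2_eq_square)
  qed (use pB that in simp)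
  have \<mu>_sum: "\<mu> = (\<Sum>i\<in>{1..n}. measure_pmf.prob M (B i))"
    using pB by (simp add: \<mu>_def expected_isolated_def p_def)
  have "(\<Sum>i\<in>{1..n}. \<Sum>j\<in>{1..n}. measure_pmf.prob M (B i \<inter> B j))
      \<le> (\<Sum>i\<in>{1..n}. \<Sum>j\<in>{1..n}. (if i = j then p ^ m else 0) + p ^ m * p ^ m)"
    using pBB by (intro sum_mono) auto
  also have "\<dots> = \<mu> + \<mu>\<^sup>2"
    by (simp add: sum.distrib \<mu>_def expected_isolated_def p_def power2_eq_square algebra_simps)
  finally have second: "(\<Sum>i\<in>{1..n}. \<Sum>j\<in>{1..n}. measure_pmf.prob M (B i \<inter> B j)) \<le> \<mu> + \<mu>\<^sup>2" .
  have "{V. hyp_connected {1..n} (V ` {..<m})} \<subseteq> {V. \<forall>i\<in>{1..n}. V \<notin> B i}"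
  proof safe
    fix V i assume "hyp_connected {1..n} (V ` {..<m})" "i \<in> {1..n}" "V \<in> B i"
    moreover have "(if i = 1 then 2 else 1) \<in> {1..n}" "(if i = 1 then 2 else 1) \<noteq> i"
      using n by auto
    ultimately show False
      using hyp_connected_imp_covered[of "{1..n}" "V ` {..<m}" i "if i = 1 then 2 else 1"] by (auto simp: B_def)
  qed
  then have "prob_connected n m d \<le> measure_pmf.prob M {V. \<forall>i\<in>{1..n}. V \<notin> B i}"
    unfolding prob_connected_def M_def by (intro measure_pmf.finite_measure_mono) auto
  also have "\<dots> \<le> (\<mu> + \<mu>\<^sup>2 - \<mu>\<^sup>2) / \<mu>\<^sup>2"
    using prob_no_event_le_second_moment[OF _ _ \<mu>_sum] finite_set_pmf_hyp_model n pos second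
    by (fastforce simp: M_def \<mu>_def intro: order_trans divide_right_mono)
  finally show ?thesis using pos by (simp add: \<mu>_def power2_eq_square)
qed

lemma not_hyp_connected_small_cut:
  assumes "finite V" "\<not> hyp_connected V E"
  obtains A where "A \<subseteq> V" "A \<noteq> {}" "2 * card A \<le> card V"
    "\<forall>e\<in>E. e \<inter> A = {} \<or> e \<inter> (V - A) = {}"
proof -
  obtain A where A: "A \<subseteq> V" "A \<noteq> {}" "V - A \<noteq> {}"
    and sides: "\<forall>e\<in>E. e \<inter> A = {} \<or> e \<inter> (V - A) = {}"
    using assms(2) unfolding hyp_connected_def by blast
  show ?thesis
  proof (cases "2 * card A \<le> card V")
    case False
    have "card (V - A) = card V - card A" "V - (V - A) = A"
      using A assms(1) by (auto simp: card_Diff_subset finite_subset)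
    then have "2 * card (V - A) \<le> card V" "\<forall>e\<in>E. e \<inter> (V - A) = {} \<or> e \<inter> (V - (V - A)) = {}"
      using False sides by auto
    then show ?thesis using that[of "V - A"] A by blast
  qed (use that A sides in blast)
qed

definition small_cuts :: "nat \<Rightarrow> nat set set" where
  "small_cuts n = {A. A \<subseteq> {1..n} \<and> A \<noteq> {} \<and> 2 * card A \<le> n}"

lemma sum_small_cuts:
  fixes f :: "nat \<Rightarrow> real"
  shows "(\<Sum>A\<in>small_cuts n. f (card A)) = (\<Sum>k\<in>{1..n div 2}. real (n choose k) * f k)"
proof -
  have fin: "finite (small_cuts n)"
    unfolding small_cuts_def by (rule finite_subset[of _ "Pow {1..n}"]) auto
  have "card A \<in> {1..n div 2}" if "A \<in> small_cuts n" for A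
    using that finite_subset[of A "{1..n}"] by (auto simp: small_cuts_def Suc_le_eq card_gt_0_iff)
  then have "(\<Sum>A\<in>small_cuts n. f (card A))
      = (\<Sum>k\<in>{1..n div 2}. \<Sum>A\<in>{A \<in> small_cuts n. card A = k}. f (card A))"
    by (intro sum.group[symmetric] fin) auto
  also have "\<dots> = (\<Sum>k\<in>{1..n div 2}. \<Sum>A\<in>{A. A \<subseteq> {1..n} \<and> card A = k}. f k)"
    by (intro sum.cong) (auto simp: small_cuts_def)
  also have "\<dots> = (\<Sum>k\<in>{1..n div 2}. real (n choose k) * f k)"
    using n_subsets[of "{1..n}"] by simp
  finally show ?thesis .
qed

lemma sum_power_le_geometric:
  fixes x :: real
  assumes "0 \<le> x" "x < 1"
  shows "(\<Sum>k\<in>{1..K}. x ^ k) \<le> x / (1 - x)"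
proof -
  have "(\<Sum>k\<in>{1..K}. x ^ k) = x * (\<Sum>i<K. x ^ i)"
    by (induction K) (simp_all add: atLeastAtMostSuc_conv algebra_simps)
  also have "\<dots> = x * ((1 - x ^ K) / (1 - x))"
    using assms by (simp add: sum_gp_strict)
  also have "\<dots> \<le> x * (1 / (1 - x))"
    using assms by (intro mult_left_mono divide_right_mono) auto
  finally show ?thesis by simp
qed

lemma prob_not_connected_le_sum_small_cuts:
  assumes d: "1 \<le> d" "d \<le> n"
  shows "1 - prob_connected n m d \<le> (\<Sum>k\<in>{1..n div 2}. real (n choose k) * one_sided_fraction n k d ^ m)"
proof -
  define M where "M = hyp_model n m d"
  define cut_free where "cut_free A = {V. \<forall>j<m. V j \<in> {S. S \<inter> A = {} \<or> S \<inter> ({1..n} - A) = {}}}" for A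
  have "1 - prob_connected n m d = measure_pmf.prob M {V. \<not> hyp_connected {1..n} (V ` {..<m})}"
    using measure_pmf.prob_compl[of "{V. hyp_connected {1..n} (V ` {..<m})}" M]
    by (simp add: prob_connected_def M_def Compl_eq_Diff_UNIV[symmetric] Collect_neg_eq)
  also have "\<dots> \<le> measure_pmf.prob M (\<Union>A\<in>small_cuts n. cut_free A)"
  proof (intro measure_pmf.finite_measure_mono subsetI)
    fix V assume "V \<in> {V. \<not> hyp_connected {1..n} (V ` {..<m})}"
    then obtain A where "A \<subseteq> {1..n}" "A \<noteq> {}" "2 * card A \<le> card {1..n}"
        "\<forall>e\<in>V ` {..<m}. e \<inter> A = {} \<or> e \<inter> ({1..n} - A) = {}"
      using not_hyp_connected_small_cut[OF finite_atLeastAtMost] by blast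
    then have "A \<in> small_cuts n" "V \<in> cut_free A"
      by (auto simp: small_cuts_def cut_free_def)
    then show "V \<in> (\<Union>A\<in>small_cuts n. cut_free A)" by blast
  qed simp
  also have "\<dots> \<le> (\<Sum>A\<in>small_cuts n. measure_pmf.prob M (cut_free A))"
    by (intro measure_pmf.finite_measure_subadditive_finite)
      (auto simp: small_cuts_def intro: finite_subset[of _ "Pow {1..n}"])
  also have "\<dots> = (\<Sum>A\<in>small_cuts n. one_sided_fraction n (card A) d ^ m)"
  proof (rule sum.cong)
    fix A assume "A \<in> small_cuts n"
    then show "measure_pmf.prob M (cut_free A) = one_sided_fraction n (card A) d ^ m"
      unfolding M_def cut_free_def measure_hyp_model_all
      using measure_unif_dsubset_one_sided[of A n d] d by (simp add: small_cuts_def)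
  qed simp
  also have "\<dots> = (\<Sum>k\<in>{1..n div 2}. real (n choose k) * one_sided_fraction n k d ^ m)"
    by (rule sum_small_cuts)
  finally show ?thesis .
qed

lemma prob_not_connected_le:
  assumes d: "2 \<le> d" "d \<le> n" and small: "expected_isolated n m d \<le> 1"
  defines "x \<equiv> 2 * exp 1 * sqrt (expected_isolated n m d)"
  assumes x: "x < 1"
  shows "1 - prob_connected n m d \<le> x / (1 - x)"
proof -
  have "1 - prob_connected n m d \<le> (\<Sum>k\<in>{1..n div 2}. real (n choose k) * one_sided_fraction n k d ^ m)"
    using d by (intro prob_not_connected_le_sum_small_cuts) auto
  also have "\<dots> \<le> (\<Sum>k\<in>{1..n div 2}. x ^ k)"
    using binomial_mult_one_sided_power_le d small by (intro sum_mono) (auto simp: x_def)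
  also have "\<dots> \<le> x / (1 - x)"
    using expected_isolated_nonneg[OF d(2)] x by (intro sum_power_le_geometric) (simp_all add: x_def)
  finally show ?thesis .
qed

definition ereal_ln :: "real \<Rightarrow> ereal" where
  "ereal_ln x = (if x = 0 then - \<infinity> else ereal (ln x))"

lemma threshold_quantity_eq_ereal_ln:
  assumes "1 \<le> m" "d \<le> n"
  shows "threshold_quantity n m d = ereal_ln (expected_isolated n m d)"
proof (cases "d = n")
  case False
  then have "0 < 1 - real d / real n" "0 < real n" using assms by auto
  then show ?thesis
    by (simp add: threshold_quantity_def ereal_ln_def expected_isolated_def False ln_mult ln_realpow)
qed (use assms in \<open>simp add: threshold_quantity_def ereal_ln_def expected_isolated_def\<close>)

lemma filterlim_at_top_if_ereal_ln_tendsto_PInfty: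
  fixes f :: "'a \<Rightarrow> real"
  assumes nonneg: "eventually (\<lambda>x. 0 \<le> f x) F" and lim: "((\<lambda>x. ereal_ln (f x)) \<longlongrightarrow> \<infinity>) F"
  shows "filterlim f at_top F"
proof (subst filterlim_at_top_gt[where c = 0], safe)
  fix Z :: real assume "0 < Z"
  have "eventually (\<lambda>x. ereal (ln Z) < ereal_ln (f x)) F"
    using lim by (simp add: tendsto_PInfty)
  with nonneg show "eventually (\<lambda>x. Z \<le> f x) F"
  proof eventually_elim
    case (elim x)
    then show ?case using \<open>0 < Z\<close> by (cases "f x = 0") (auto simp: ereal_ln_def)
  qed
qed

lemma tendsto_zero_if_ereal_ln_tendsto_MInfty:
  fixes f :: "'a \<Rightarrow> real"
  assumes nonneg: "eventually (\<lambda>x. 0 \<le> f x) F" and lim: "((\<lambda>x. ereal_ln (f x)) \<longlongrightarrow> - \<infinity>) F"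
  shows "(f \<longlongrightarrow> 0) F"
proof (rule order_tendstoI)
  fix a :: real assume "a < 0"
  from nonneg show "eventually (\<lambda>x. a < f x) F"
    by eventually_elim (use \<open>a < 0\<close> in linarith)
next
  fix a :: real assume "0 < a"
  have "eventually (\<lambda>x. ereal_ln (f x) < ereal (ln a)) F"
    using lim by (simp add: tendsto_MInfty)
  with nonneg show "eventually (\<lambda>x. f x < a) F"
  proof eventually_elim
    case (elim x)
    then show ?case using \<open>0 < a\<close> by (cases "f x = 0") (auto simp: ereal_ln_def)
  qed
qed

lemma prob_connected_tendsto_zero:
  assumes ranges: "eventually (\<lambda>n. 2 \<le> d n \<and> d n \<le> n) sequentially"
    and lim: "filterlim (\<lambda>n. expected_isolated n (m n) (d n)) at_top sequentially"
  shows "(\<lambda>n. prob_connected n (m n) (d n)) \<longlonglongrightarrow> 0"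
proof (rule tendsto_sandwich)
  show "eventually (\<lambda>n. 0 \<le> prob_connected n (m n) (d n)) sequentially"
    by (simp add: prob_connected_def)
  have "eventually (\<lambda>n. 0 < expected_isolated n (m n) (d n)) sequentially"
    using lim by (rule filterlim_at_top_dense[THEN iffD1, rule_format])
  with ranges show "eventually (\<lambda>n. prob_connected n (m n) (d n)
      \<le> inverse (expected_isolated n (m n) (d n))) sequentially"
    by eventually_elim (auto simp: inverse_eq_divide intro: prob_connected_le_inverse_expected_isolated)
  show "(\<lambda>n. inverse (expected_isolated n (m n) (d n))) \<longlonglongrightarrow> 0"
    using lim by (rule tendsto_inverse_0_at_top)
qed simp

lemma prob_connected_tendsto_one:
  assumes ranges: "eventually (\<lambda>n. 2 \<le> d n \<and> d n \<le> n) sequentially"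
    and lim: "(\<lambda>n. expected_isolated n (m n) (d n)) \<longlonglongrightarrow> 0"
  shows "(\<lambda>n. prob_connected n (m n) (d n)) \<longlonglongrightarrow> 1"
proof -
  define x where "x n = 2 * exp 1 * sqrt (expected_isolated n (m n) (d n))" for n
  have x: "x \<longlonglongrightarrow> 0"
    unfolding x_def using tendsto_mult[OF tendsto_const tendsto_real_sqrt[OF lim], of "2 * exp 1"] by simp
  then have bound: "(\<lambda>n. x n / (1 - x n)) \<longlonglongrightarrow> 0"
    using tendsto_divide[OF x tendsto_diff[OF tendsto_const x, of 1]] by simp
  have "eventually (\<lambda>n. x n < 1) sequentially"
    "eventually (\<lambda>n. expected_isolated n (m n) (d n) < 1) sequentially"
    using order_tendstoD(2)[OF x] order_tendstoD(2)[OF lim] by simp_all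
  with ranges have upper: "eventually (\<lambda>n. 1 - prob_connected n (m n) (d n) \<le> x n / (1 - x n)) sequentially"
    by eventually_elim (use prob_not_connected_le in \<open>simp add: x_def\<close>)
  have lower: "eventually (\<lambda>n. 0 \<le> 1 - prob_connected n (m n) (d n)) sequentially"
    by (simp add: prob_connected_def)
  have "(\<lambda>n. 1 - prob_connected n (m n) (d n)) \<longlonglongrightarrow> 0"
    by (rule tendsto_sandwich[OF lower upper tendsto_const bound])
  from tendsto_diff[OF tendsto_const this, of 1] show ?thesis by simp
qed

theorem mainTheorem6:
  fixes m d :: "nat \<Rightarrow> nat"
  assumes m_pos: "\<And>n. m n \<ge> 1"
    and d_range: "\<And>n. n \<ge> 2 \<Longrightarrow> 2 \<le> d n \<and> d n \<le> n"
  shows "((\<lambda>n. threshold_quantity n (m n) (d n)) \<longlonglongrightarrow> \<infinity>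
            \<longrightarrow> (\<lambda>n. prob_connected n (m n) (d n)) \<longlonglongrightarrow> 0)
       \<and> ((\<lambda>n. threshold_quantity n (m n) (d n)) \<longlonglongrightarrow> - \<infinity>
            \<longrightarrow> (\<lambda>n. prob_connected n (m n) (d n)) \<longlonglongrightarrow> 1)"
proof -
  let ?\<epsilon> = "\<lambda>n. expected_isolated n (m n) (d n)"
  have ranges: "eventually (\<lambda>n. 2 \<le> d n \<and> d n \<le> n) sequentially"
    using eventually_ge_at_top[of 2] by eventually_elim (use d_range in blast)
  then have nonneg: "eventually (\<lambda>n. 0 \<le> ?\<epsilon> n) sequentially"
    by eventually_elim (simp add: expected_isolated_nonneg)
  from ranges have "eventually (\<lambda>n. threshold_quantity n (m n) (d n) = ereal_ln (?\<epsilon> n)) sequentially"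
    by eventually_elim (auto intro: threshold_quantity_eq_ereal_ln m_pos)
  then have threshold: "((\<lambda>n. threshold_quantity n (m n) (d n)) \<longlonglongrightarrow> l) \<longleftrightarrow> ((\<lambda>n. ereal_ln (?\<epsilon> n)) \<longlonglongrightarrow> l)"
    for l by (rule tendsto_cong)
  show ?thesis
    using ranges prob_connected_tendsto_zero filterlim_at_top_if_ereal_ln_tendsto_PInfty[OF nonneg]
      prob_connected_tendsto_one tendsto_zero_if_ereal_ln_tendsto_MInfty[OF nonneg]
    by (simp add: threshold)
qed

end
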